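(* Let $G_H$ be a finite undirected multigraph (parallel edges allowed, no self-loops) with vertex set $V$ and edge set partitioned as $E = S \sqcup S^c$ into secure edges $S$ and insecure edges $S^c$, and let $0 < p_J^{S^c} \le p_J^{S} \le p_I$ be real costs satisfying $p_J^{S^c} < p_I/2$ and $p_J^{S} + p_J^{S^c} \ge p_I$. Consider the following two problems. (II-A) Give weight $p_I - p_J^{S^c}$ to secure edges and $p_J^{S^c}$ to insecure edges, and find a cut $C^*$ of minimum weight among cuts $C$ with $n^S_C < |C|/2$; form the attack on $C^*$ that injects data into $n^S_{C^*}+1$ insecure edges of $C^*$ and jams all other insecure edges of $C^*$. (II-B) Give weight $p_J^{S}$ to secure edges and $p_I - p_J^{S}$ to insecure edges, and find a cut $C^*$ of minimum weight among cuts $C$ with $n^S_C \ge |C|/2$ and $n^{S^c}_C > 0$; form the attack on $C^*$ that injects data into all insecure edges of $C^*$ and jams $n^S_{C^*} + 1 - n^{S^c}_{C^*}$ secure edges of $C^*$. Then, among the attacks produced by those of the two problems that have a feasible solution, one of minimum cost is an optimal detectable generalized attack in $G_H$.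
   Context: For a nonempty proper subset $U \subsetneq V$, the cut $\delta(U)$ is the set of edges with exactly one endpoint in $U$; a cut of $G_H$ is any set of this form. For a cut $C$, $n^S_C = |C\cap S|$ and $n^{S^c}_C = |C \cap S^c|$. The costs are: $p_J^{S^c}$ per jammed insecure edge, $p_J^S$ per jammed secure edge, $p_I$ per insecure edge with injected data. A generalized attack is a triple $(C,J,I)$ where $C$ is a cut, $J \subseteq C$ is the set of jammed edges, and $I \subseteq (C \cap S^c)\setminus J$ is a nonempty set of injected edges; its cost is $p_J^{S}|J\cap S| + p_J^{S^c}|J \cap S^c| + p_I |I|$. The attack is detectable if $2|I| > |C \setminus J|$ (the injected edges form a strict majority of the non-jammed edges of the cut). An optimal detectable generalized attack is one of minimum cost among all detectable generalized attacks. *)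

theory Defs
  imports Complex_Main
begin

text \<open>Finite undirected multigraph: vertex set V, edge set E (edges are abstract
  objects, so parallel edges are allowed); each edge e has the two endpoints
  src e and tgt e (orientation irrelevant), no self-loops. S \<subseteq> E are the
  secure edges, E - S the insecure ones.\<close>

definition cut_of :: "'e set \<Rightarrow> ('e \<Rightarrow> 'v) \<Rightarrow> ('e \<Rightarrow> 'v) \<Rightarrow> 'v set \<Rightarrow> 'e set" where
  "cut_of E src tgt U = {e \<in> E. (src e \<in> U) \<noteq> (tgt e \<in> U)}"

definition is_cut :: "'v set \<Rightarrow> 'e set \<Rightarrow> ('e \<Rightarrow> 'v) \<Rightarrow> ('e \<Rightarrow> 'v) \<Rightarrow> 'e set \<Rightarrow> bool" where
  "is_cut V E src tgt C \<longleftrightarrow> (\<exists>U. U \<noteq> {} \<and> U \<subset> V \<and> C = cut_of E src tgt U)"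

definition gen_attack ::
  "'v set \<Rightarrow> 'e set \<Rightarrow> ('e \<Rightarrow> 'v) \<Rightarrow> ('e \<Rightarrow> 'v) \<Rightarrow> 'e set \<Rightarrow> 'e set \<Rightarrow> 'e set \<Rightarrow> 'e set \<Rightarrow> bool" where
  "gen_attack V E src tgt S C J I \<longleftrightarrow>
     is_cut V E src tgt C \<and> J \<subseteq> C \<and> I \<subseteq> (C \<inter> (E - S)) - J \<and> I \<noteq> {}"

definition attack_cost :: "'e set \<Rightarrow> 'e set \<Rightarrow> real \<Rightarrow> real \<Rightarrow> real \<Rightarrow> 'e set \<Rightarrow> 'e set \<Rightarrow> real" where
  "attack_cost E S pJS pJSc pI J I =
     pJS * real (card (J \<inter> S)) + pJSc * real (card (J \<inter> (E - S))) + pI * real (card I)"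

definition detectable :: "'e set \<Rightarrow> 'e set \<Rightarrow> 'e set \<Rightarrow> bool" where
  "detectable C J I \<longleftrightarrow> 2 * card I > card (C - J)"

definition optimal_detectable ::
  "'v set \<Rightarrow> 'e set \<Rightarrow> ('e \<Rightarrow> 'v) \<Rightarrow> ('e \<Rightarrow> 'v) \<Rightarrow> 'e set \<Rightarrow> real \<Rightarrow> real \<Rightarrow> real
    \<Rightarrow> 'e set \<Rightarrow> 'e set \<Rightarrow> 'e set \<Rightarrow> bool" where
  "optimal_detectable V E src tgt S pJS pJSc pI C J I \<longleftrightarrow>
     gen_attack V E src tgt S C J I \<and> detectable C J I \<and>
     (\<forall>C' J' I'. gen_attack V E src tgt S C' J' I' \<and> detectable C' J' I' \<longrightarrow>
        attack_cost E S pJS pJSc pI J I \<le> attack_cost E S pJS pJSc pI J' I')"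

definition weightA :: "'e set \<Rightarrow> 'e set \<Rightarrow> real \<Rightarrow> real \<Rightarrow> 'e set \<Rightarrow> real" where
  "weightA E S pJSc pI C =
     (pI - pJSc) * real (card (C \<inter> S)) + pJSc * real (card (C \<inter> (E - S)))"

definition feasA :: "'v set \<Rightarrow> 'e set \<Rightarrow> ('e \<Rightarrow> 'v) \<Rightarrow> ('e \<Rightarrow> 'v) \<Rightarrow> 'e set \<Rightarrow> 'e set \<Rightarrow> bool" where
  "feasA V E src tgt S C \<longleftrightarrow>
     is_cut V E src tgt C \<and> real (card (C \<inter> S)) < real (card C) / 2"

definition attackA ::
  "'v set \<Rightarrow> 'e set \<Rightarrow> ('e \<Rightarrow> 'v) \<Rightarrow> ('e \<Rightarrow> 'v) \<Rightarrow> 'e set \<Rightarrow> real \<Rightarrow> real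
    \<Rightarrow> 'e set \<Rightarrow> 'e set \<Rightarrow> 'e set \<Rightarrow> bool" where
  "attackA V E src tgt S pJSc pI C J I \<longleftrightarrow>
     feasA V E src tgt S C \<and>
     (\<forall>C'. feasA V E src tgt S C' \<longrightarrow> weightA E S pJSc pI C \<le> weightA E S pJSc pI C') \<and>
     I \<subseteq> C \<inter> (E - S) \<and> card I = card (C \<inter> S) + 1 \<and> J = (C \<inter> (E - S)) - I"

definition weightB :: "'e set \<Rightarrow> 'e set \<Rightarrow> real \<Rightarrow> real \<Rightarrow> 'e set \<Rightarrow> real" where
  "weightB E S pJS pI C =
     pJS * real (card (C \<inter> S)) + (pI - pJS) * real (card (C \<inter> (E - S)))"

definition feasB :: "'v set \<Rightarrow> 'e set \<Rightarrow> ('e \<Rightarrow> 'v) \<Rightarrow> ('e \<Rightarrow> 'v) \<Rightarrow> 'e set \<Rightarrow> 'e set \<Rightarrow> bool" where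
  "feasB V E src tgt S C \<longleftrightarrow>
     is_cut V E src tgt C \<and> real (card (C \<inter> S)) \<ge> real (card C) / 2 \<and>
     card (C \<inter> (E - S)) > 0"

definition attackB ::
  "'v set \<Rightarrow> 'e set \<Rightarrow> ('e \<Rightarrow> 'v) \<Rightarrow> ('e \<Rightarrow> 'v) \<Rightarrow> 'e set \<Rightarrow> real \<Rightarrow> real
    \<Rightarrow> 'e set \<Rightarrow> 'e set \<Rightarrow> 'e set \<Rightarrow> bool" where
  "attackB V E src tgt S pJS pI C J I \<longleftrightarrow>
     feasB V E src tgt S C \<and>
     (\<forall>C'. feasB V E src tgt S C' \<longrightarrow> weightB E S pJS pI C \<le> weightB E S pJS pI C') \<and>
     I = C \<inter> (E - S) \<and> J \<subseteq> C \<inter> S \<and>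
     card J = card (C \<inter> S) + 1 - card (C \<inter> (E - S))"

definition produced_attack ::
  "'v set \<Rightarrow> 'e set \<Rightarrow> ('e \<Rightarrow> 'v) \<Rightarrow> ('e \<Rightarrow> 'v) \<Rightarrow> 'e set \<Rightarrow> real \<Rightarrow> real \<Rightarrow> real
    \<Rightarrow> 'e set \<Rightarrow> 'e set \<Rightarrow> 'e set \<Rightarrow> bool" where
  "produced_attack V E src tgt S pJS pJSc pI C J I \<longleftrightarrow>
     attackA V E src tgt S pJSc pI C J I \<or> attackB V E src tgt S pJS pI C J I"

end

theory Submission
  imports Defs
begin

text \<open>Let \<open>s, t\<close> be the numbers of secure and insecure edges of a cut and \<open>jS, jT, i\<close> the
  numbers of jammed secure, jammed insecure and injected edges of a detectable attack on it.
  Detectability and the disjointness of jamming and injection give the constraints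
  \<open>s + t + 1 \<le> 2 i + jS + jT\<close> and \<open>i + jT \<le> t\<close>. Under the price conditions a nonnegative
  combination of these (and of \<open>jS, jT \<ge> 0\<close>) bounds the cost of the attack from below both by
  the II-A weight of its cut plus \<open>pI - pJSc\<close> and by its II-B weight plus \<open>pJS\<close>, which are exactly
  the costs of the attacks that II-A and II-B build on a cut. Since a detectable attack injects
  into some insecure edge, its cut is feasible for II-A or for II-B, and the minimiser of that
  problem gives a produced attack that is no more expensive.\<close>

lemma ex_min_weight_subset:
  fixes w :: "'a set \<Rightarrow> 'b::linorder"
  assumes "finite E" and "\<And>C. P C \<Longrightarrow> C \<subseteq> E" and "P C\<^sub>1"
  obtains C\<^sub>0 where "P C\<^sub>0" and "\<And>C. P C \<Longrightarrow> w C\<^sub>0 \<le> w C"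
proof -
  have "finite {C. P C}"
    using assms(1,2) by (auto intro: finite_subset[of _ "Pow E"])
  moreover have "{C. P C} \<noteq> {}"
    using assms(3) by auto
  ultimately obtain C\<^sub>0 where "is_arg_min w (\<lambda>C. C \<in> {C. P C}) C\<^sub>0"
    using ex_is_arg_min_if_finite by blast
  then show thesis
    using that by (auto simp: is_arg_min_linorder)
qed

lemma is_cut_subset: "is_cut V E src tgt C \<Longrightarrow> C \<subseteq> E"
  unfolding is_cut_def cut_of_def by auto

context
  fixes V :: "'v set" and E :: "'e set" and src tgt :: "'e \<Rightarrow> 'v" and S :: "'e set"
  assumes finite_E: "finite E"
begin

lemma card_secure_insecure:
  assumes "C \<subseteq> E"
  shows "card C = card (C \<inter> S) + card (C \<inter> (E - S))"
proof -
  have "C \<inter> (E - S) = C - S"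
    using assms by auto
  then show ?thesis
    using card_Int_Diff[of C S] finite_subset[OF assms finite_E] by simp
qed

lemma is_cut_card_secure_insecure:
  "is_cut V E src tgt C \<Longrightarrow> card C = card (C \<inter> S) + card (C \<inter> (E - S))"
  by (rule card_secure_insecure[OF is_cut_subset])

lemma detectable_attack_counts:
  assumes "gen_attack V E src tgt S C J I" and "detectable C J I"
  shows "card (C \<inter> S) + card (C \<inter> (E - S)) + 1 \<le> 2 * card I + card (J \<inter> S) + card (J \<inter> (E - S))"
    and "card I + card (J \<inter> (E - S)) \<le> card (C \<inter> (E - S))"
    and "card (C \<inter> (E - S)) > 0"
proof -
  have cut: "is_cut V E src tgt C" and "J \<subseteq> C" and I: "I \<subseteq> (C \<inter> (E - S)) - J" "I \<noteq> {}"
    using assms(1) unfolding gen_attack_def by auto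
  have "C \<subseteq> E"
    using cut by (rule is_cut_subset)
  with \<open>J \<subseteq> C\<close> have "finite C" "J \<subseteq> E"
    using finite_E by (auto intro: finite_subset)
  have "card (C - J) = card C - card J" "card J \<le> card C"
    using \<open>finite C\<close> \<open>J \<subseteq> C\<close> by (auto intro: card_Diff_subset card_mono finite_subset)
  moreover have "2 * card I > card (C - J)"
    using assms(2) unfolding detectable_def .
  ultimately show "card (C \<inter> S) + card (C \<inter> (E - S)) + 1 \<le> 2 * card I + card (J \<inter> S) + card (J \<inter> (E - S))"
    using is_cut_card_secure_insecure[OF cut] card_secure_insecure[OF \<open>J \<subseteq> E\<close>] by linarith
  have fin: "finite (C \<inter> (E - S))"
    using \<open>finite C\<close> by simp
  have "card (I \<union> (J \<inter> (E - S))) = card I + card (J \<inter> (E - S))"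
    using I fin \<open>J \<subseteq> C\<close> \<open>finite C\<close> by (intro card_Un_disjoint) (auto intro: finite_subset)
  moreover have "card (I \<union> (J \<inter> (E - S))) \<le> card (C \<inter> (E - S))"
    using I \<open>J \<subseteq> C\<close> fin by (intro card_mono) auto
  ultimately show "card I + card (J \<inter> (E - S)) \<le> card (C \<inter> (E - S))"
    by simp
  show "card (C \<inter> (E - S)) > 0"
    using I fin by (auto simp: card_gt_0_iff)
qed

lemma weightA_le_attack_cost:
  assumes "gen_attack V E src tgt S C J I" and "detectable C J I"
    and "0 < pJSc" and "pJSc < pI / 2" and "pI \<le> pJS + pJSc"
  shows "weightA E S pJSc pI C + pI - pJSc \<le> attack_cost E S pJS pJSc pI J I"
proof -
  define s t jS jT i where "s = real (card (C \<inter> S))" and "t = real (card (C \<inter> (E - S)))"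
    and "jS = real (card (J \<inter> S))" and "jT = real (card (J \<inter> (E - S)))" and "i = real (card I)"
  have detect: "0 \<le> 2 * i + jS + jT - s - t - 1" and disjoint: "0 \<le> t - i - jT"
    using detectable_attack_counts[OF assms(1,2)] unfolding s_def t_def jS_def jT_def i_def
    by linarith+
  have "attack_cost E S pJS pJSc pI J I - (weightA E S pJSc pI C + pI - pJSc)
      = (pJS + pJSc - pI) * jS + (pI - pJSc) * (2 * i + jS + jT - s - t - 1)
        + (pI - 2 * pJSc) * (t - i - jT)"
    unfolding attack_cost_def weightA_def s_def t_def jS_def jT_def i_def by algebra
  also have "\<dots> \<ge> 0"
    using assms(3-5) detect disjoint by (intro add_nonneg_nonneg mult_nonneg_nonneg) (auto simp: jS_def)
  finally show ?thesis
    by simp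
qed

lemma weightB_le_attack_cost:
  assumes "gen_attack V E src tgt S C J I" and "detectable C J I"
    and "0 < pJSc" and "pJSc < pI / 2" and "pI \<le> pJS + pJSc"
  shows "weightB E S pJS pI C + pJS \<le> attack_cost E S pJS pJSc pI J I"
proof -
  define s t jS jT i where "s = real (card (C \<inter> S))" and "t = real (card (C \<inter> (E - S)))"
    and "jS = real (card (J \<inter> S))" and "jT = real (card (J \<inter> (E - S)))" and "i = real (card I)"
  have detect: "0 \<le> 2 * i + jS + jT - s - t - 1" and disjoint: "0 \<le> t - i - jT"
    using detectable_attack_counts[OF assms(1,2)] unfolding s_def t_def jS_def jT_def i_def
    by linarith+
  have "attack_cost E S pJS pJSc pI J I - (weightB E S pJS pI C + pJS)
      = (pJS + pJSc - pI) * jT + pJS * (2 * i + jS + jT - s - t - 1)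
        + (2 * pJS - pI) * (t - i - jT)"
    unfolding attack_cost_def weightB_def s_def t_def jS_def jT_def i_def by algebra
  also have "\<dots> \<ge> 0"
    using assms(3-5) detect disjoint by (intro add_nonneg_nonneg mult_nonneg_nonneg) (auto simp: jT_def)
  finally show ?thesis
    by simp
qed

lemma attackA_detectable_and_cost:
  assumes "attackA V E src tgt S pJSc pI C J I"
  shows "gen_attack V E src tgt S C J I" and "detectable C J I"
    and "attack_cost E S pJS pJSc pI J I = weightA E S pJSc pI C + pI - pJSc"
proof -
  have cut: "is_cut V E src tgt C" and I: "I \<subseteq> C \<inter> (E - S)" "card I = card (C \<inter> S) + 1"
    and J: "J = (C \<inter> (E - S)) - I"
    using assms unfolding attackA_def feasA_def by auto
  have fin: "finite C"
    using is_cut_subset[OF cut] finite_E by (rule finite_subset)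
  have "C - J = (C \<inter> S) \<union> I"
    using J I is_cut_subset[OF cut] by auto
  moreover have "card ((C \<inter> S) \<union> I) = card (C \<inter> S) + card I"
    using I(1) fin by (subst card_Un_disjoint) (auto intro: finite_subset)
  ultimately show "detectable C J I"
    unfolding detectable_def using I by simp
  show "gen_attack V E src tgt S C J I"
    unfolding gen_attack_def using cut I J by auto
  have "card J = card (C \<inter> (E - S)) - card I" "card I \<le> card (C \<inter> (E - S))"
    using J I(1) fin by (auto intro: card_Diff_subset card_mono finite_subset)
  moreover have "J \<inter> S = {}" "J \<inter> (E - S) = J"
    using J by auto
  ultimately show "attack_cost E S pJS pJSc pI J I = weightA E S pJSc pI C + pI - pJSc"
    unfolding attack_cost_def weightA_def using I(2) by (simp add: of_nat_diff algebra_simps)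
qed

lemma attackB_detectable_and_cost:
  assumes "attackB V E src tgt S pJS pI C J I"
  shows "gen_attack V E src tgt S C J I" and "detectable C J I"
    and "attack_cost E S pJS pJSc pI J I = weightB E S pJS pI C + pJS"
proof -
  have cut: "is_cut V E src tgt C" and half: "real (card C) / 2 \<le> real (card (C \<inter> S))"
    and insecure: "card (C \<inter> (E - S)) > 0" and I: "I = C \<inter> (E - S)" and J: "J \<subseteq> C \<inter> S"
    and card_J: "card J = card (C \<inter> S) + 1 - card (C \<inter> (E - S))"
    using assms unfolding attackB_def feasB_def by auto
  have fin: "finite C"
    using is_cut_subset[OF cut] finite_E by (rule finite_subset)
  have split: "card C = card (C \<inter> S) + card (C \<inter> (E - S))"
    using is_cut_card_secure_insecure[OF cut] .
  have "card (C - J) = card C - card J" "card J \<le> card (C \<inter> S)"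
    using J fin by (auto intro: card_Diff_subset card_mono finite_subset)
  then show "detectable C J I"
    unfolding detectable_def using split card_J insecure I by simp
  show "gen_attack V E src tgt S C J I"
    unfolding gen_attack_def using cut I J insecure by auto
  have "card (C \<inter> (E - S)) \<le> card (C \<inter> S)"
    using half split by linarith
  then have real_J: "real (card J) = real (card (C \<inter> S)) + 1 - real (card (C \<inter> (E - S)))"
    using card_J by (simp add: of_nat_diff)
  have "J \<inter> S = J" "J \<inter> (E - S) = {}"
    using J by auto
  then show "attack_cost E S pJS pJSc pI J I = weightB E S pJS pI C + pJS"
    unfolding attack_cost_def weightB_def I by (simp add: real_J algebra_simps)
qed

lemma produced_attack_detectable:
  assumes "produced_attack V E src tgt S pJS pJSc pI C J I"
  shows "gen_attack V E src tgt S C J I \<and> detectable C J I"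
  using assms attackA_detectable_and_cost(1,2) attackB_detectable_and_cost(1,2)
  unfolding produced_attack_def by blast

lemma ex_attackA_cost_le_weightA:
  assumes "feasA V E src tgt S C'"
  obtains C J I where "attackA V E src tgt S pJSc pI C J I"
    and "attack_cost E S pJS pJSc pI J I \<le> weightA E S pJSc pI C' + pI - pJSc"
proof -
  have subset: "C \<subseteq> E" if "feasA V E src tgt S C" for C
    using that is_cut_subset unfolding feasA_def by blast
  obtain C where C: "feasA V E src tgt S C"
    and min: "\<And>C'. feasA V E src tgt S C' \<Longrightarrow> weightA E S pJSc pI C \<le> weightA E S pJSc pI C'"
    using ex_min_weight_subset[of E "feasA V E src tgt S" C' "weightA E S pJSc pI", OF finite_E subset assms]
    by blast
  have "card (C \<inter> S) + 1 \<le> card (C \<inter> (E - S))"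
    using C is_cut_card_secure_insecure unfolding feasA_def by fastforce
  then obtain I where I: "I \<subseteq> C \<inter> (E - S)" "card I = card (C \<inter> S) + 1"
    by (meson obtain_subset_with_card_n)
  have attack: "attackA V E src tgt S pJSc pI C (C \<inter> (E - S) - I) I"
    unfolding attackA_def using C min I by auto
  show thesis
    using that[OF attack] attackA_detectable_and_cost(3)[OF attack] min[OF assms] by simp
qed

lemma ex_attackB_cost_le_weightB:
  assumes "feasB V E src tgt S C'"
  obtains C J I where "attackB V E src tgt S pJS pI C J I"
    and "attack_cost E S pJS pJSc pI J I \<le> weightB E S pJS pI C' + pJS"
proof -
  have subset: "C \<subseteq> E" if "feasB V E src tgt S C" for C
    using that is_cut_subset unfolding feasB_def by blast
  obtain C where C: "feasB V E src tgt S C"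
    and min: "\<And>C'. feasB V E src tgt S C' \<Longrightarrow> weightB E S pJS pI C \<le> weightB E S pJS pI C'"
    using ex_min_weight_subset[of E "feasB V E src tgt S" C' "weightB E S pJS pI", OF finite_E subset assms]
    by blast
  have "card (C \<inter> S) + 1 - card (C \<inter> (E - S)) \<le> card (C \<inter> S)"
    using C unfolding feasB_def by linarith
  then obtain J where J: "J \<subseteq> C \<inter> S" "card J = card (C \<inter> S) + 1 - card (C \<inter> (E - S))"
    by (meson obtain_subset_with_card_n)
  have attack: "attackB V E src tgt S pJS pI C J (C \<inter> (E - S))"
    unfolding attackB_def using C min J by auto
  show thesis
    using that[OF attack] attackB_detectable_and_cost(3)[OF attack] min[OF assms] by simp
qed

lemma ex_produced_attack_cost_le:
  assumes "gen_attack V E src tgt S C' J' I'" and "detectable C' J' I'"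
    and "0 < pJSc" and "pJSc < pI / 2" and "pI \<le> pJS + pJSc"
  obtains C J I where "produced_attack V E src tgt S pJS pJSc pI C J I"
    and "attack_cost E S pJS pJSc pI J I \<le> attack_cost E S pJS pJSc pI J' I'"
proof (cases "feasA V E src tgt S C'")
  case True
  then obtain C J I where "attackA V E src tgt S pJSc pI C J I"
    and "attack_cost E S pJS pJSc pI J I \<le> weightA E S pJSc pI C' + pI - pJSc"
    by (rule ex_attackA_cost_le_weightA)
  then show thesis
    using that weightA_le_attack_cost[OF assms] unfolding produced_attack_def by force
next
  case False
  have "is_cut V E src tgt C'"
    using assms(1) unfolding gen_attack_def by simp
  with False have "feasB V E src tgt S C'"
    using detectable_attack_counts(3)[OF assms(1,2)] unfolding feasA_def feasB_def by simp
  then obtain C J I where "attackB V E src tgt S pJS pI C J I"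
    and "attack_cost E S pJS pJSc pI J I \<le> weightB E S pJS pI C' + pJS"
    by (rule ex_attackB_cost_le_weightB)
  then show thesis
    using that weightB_le_attack_cost[OF assms] unfolding produced_attack_def by force
qed

end

theorem theorem6:
  fixes V :: "'v set" and E :: "'e set" and src tgt :: "'e \<Rightarrow> 'v" and S :: "'e set"
    and pJS pJSc pI :: real and C J I :: "'e set"
  assumes "finite V" and "finite E"
    and "\<forall>e\<in>E. src e \<in> V \<and> tgt e \<in> V \<and> src e \<noteq> tgt e"
    and "S \<subseteq> E"
    and "0 < pJSc" and "pJSc \<le> pJS" and "pJS \<le> pI"
    and "pJSc < pI / 2" and "pJS + pJSc \<ge> pI"
    and "produced_attack V E src tgt S pJS pJSc pI C J I"
    and "\<forall>C' J' I'. produced_attack V E src tgt S pJS pJSc pI C' J' I' \<longrightarrow>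
           attack_cost E S pJS pJSc pI J I \<le> attack_cost E S pJS pJSc pI J' I'"
  shows "optimal_detectable V E src tgt S pJS pJSc pI C J I"
proof -
  have "attack_cost E S pJS pJSc pI J I \<le> attack_cost E S pJS pJSc pI J' I'"
    if attack: "gen_attack V E src tgt S C' J' I'" "detectable C' J' I'" for C' J' I'
  proof -
    obtain C\<^sub>0 J\<^sub>0 I\<^sub>0 where "produced_attack V E src tgt S pJS pJSc pI C\<^sub>0 J\<^sub>0 I\<^sub>0"
      and "attack_cost E S pJS pJSc pI J\<^sub>0 I\<^sub>0 \<le> attack_cost E S pJS pJSc pI J' I'"
      by (rule ex_produced_attack_cost_le[OF assms(2) attack assms(5,8,9)])
    then show ?thesis
      using assms(11) by force
  qed
  then show ?thesis
    unfolding optimal_detectable_def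
    using produced_attack_detectable[OF assms(2,10)] by blast
qed

end
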